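(* Let $n\ge r\ge1$ be integers with $n=r$ or $n>r=1$. Then there exists a constant $\kappa'>0$ such that for every $Z\in{\rm St}(n,r)$, \[ {\rm dist}(Z,\mathcal{S}_{+}^{n,r})\le\kappa'\,{\rm dist}(Z,\mathbb{R}_{+}^{n\times r}). \]
   Context: ${\rm St}(n,r):=\{X\in\mathbb{R}^{n\times r}: X^\top X=I_r\}$, $\mathbb{R}_{+}^{n\times r}$ is the cone of entrywise nonnegative $n\times r$ matrices, $\mathcal{S}_{+}^{n,r}:=\mathbb{R}_{+}^{n\times r}\cap{\rm St}(n,r)$, and ${\rm dist}(X,\Omega)=\inf_{Y\in\Omega}\|X-Y\|_F$ (Frobenius norm). *)

theory Defs
  imports "HOL-Analysis.Analysis"
begin

text \<open>Real n x r matrices are represented as real^'r^'n (rows indexed by 'n, columns by 'r).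
  The norm on this type is the Euclidean norm of the vector of row norms, i.e. the Frobenius norm,
  so infdist is the Frobenius distance to a set.\<close>

definition stiefel :: "(real^'r^'n) set" where
  "stiefel = {X. transpose X ** X = mat 1}"

definition nonneg_mats :: "(real^'r^'n) set" where
  "nonneg_mats = {X. \<forall>i j. 0 \<le> X $ i $ j}"

definition nonneg_stiefel :: "(real^'r^'n) set" where
  "nonneg_stiefel = nonneg_mats \<inter> stiefel"

end

theory Submission
  imports Defs
begin

(*
  Square case. For P in S+ also P P^T = I, so W = P^T Z is orthogonal with W - I = P^T (Z - P),
  and since P >= 0 the negative part of W is dominated entrywise by P^T N, where N is the
  negative part of Z. Writing W = I + A, orthogonality reads A + A^T = -A^T A: up to a
  quadratic error, a positive entry A_ij is matched by the negative entry A_ji, and negative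
  entries are controlled by N. Summing over all entries gives |A|^2 <= 3 |N|^2 + 2 |A|^4, so
  |Z - P| <= 3 |N| <= 3 dist(Z, R+) as soon as |Z - P| <= 1/2. On the compact set St(n,r) this
  local error bound becomes a global one, since away from S+ the distance to R+ is bounded
  below.

  Single column. Normalising the positive part of the unit vector Z (or taking -Z if Z <= 0)
  gives a point of S+ within 2 |N| of Z.
*)

lemma power2_norm_matrix:
  "(norm (M::real^'c^'r))^2 = (\<Sum>i\<in>UNIV. \<Sum>j\<in>UNIV. (M$i$j)^2)"
  unfolding norm_vec_def L2_set_def by (simp add: sum_nonneg)

lemma power2_norm_matrix_eq_trace:
  "(norm (M::real^'c^'r))^2 = (\<Sum>j\<in>UNIV. (transpose M ** M)$j$j)"
  unfolding power2_norm_matrix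
  by (subst sum.swap) (simp add: matrix_matrix_mult_def transpose_def power2_eq_square)

lemma norm_transpose: "norm (transpose (M::real^'c^'r)) = norm M"
proof -
  have "(norm (transpose M))^2 = (norm M)^2"
    unfolding power2_norm_matrix by (subst sum.swap) (simp add: transpose_def)
  then show ?thesis by simp
qed

lemma norm_matrix_mul_le:
  fixes A :: "real^'n^'m" and B :: "real^'p^'n"
  shows "norm (A ** B) \<le> norm A * norm B"
proof -
  have "(norm (A ** B))^2 = (\<Sum>i\<in>UNIV. \<Sum>j\<in>UNIV. (\<Sum>k\<in>UNIV. A$i$k * B$k$j)^2)"
    unfolding power2_norm_matrix by (simp add: matrix_matrix_mult_def)
  also have "\<dots> \<le> (\<Sum>i\<in>UNIV. \<Sum>j\<in>UNIV. (\<Sum>k\<in>UNIV. (A$i$k)^2) * (\<Sum>k\<in>UNIV. (B$k$j)^2))"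
    by (intro sum_mono Cauchy_Schwarz_ineq_sum)
  also have "\<dots> = (\<Sum>i\<in>UNIV. \<Sum>k\<in>UNIV. (A$i$k)^2) * (\<Sum>k\<in>UNIV. \<Sum>j\<in>UNIV. (B$k$j)^2)"
    by (subst (2) sum.swap) (simp add: sum_product)
  also have "\<dots> = (norm A * norm B)^2"
    by (simp add: power_mult_distrib power2_norm_matrix)
  finally show ?thesis by (rule power2_le_imp_le) simp
qed

lemma matrix_add_rdistrib: "(A + B) ** C = A ** C + B ** (C::'a::semiring_1^'p^'n)"
  by (simp add: matrix_matrix_mult_def vec_eq_iff sum.distrib distrib_right)

lemma matrix_diff_ldistrib: "A ** (B - C) = A ** B - A ** (C::'a::ring_1^'p^'n)"
  by (simp add: matrix_matrix_mult_def vec_eq_iff sum_subtractf right_diff_distrib)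

lemma transpose_add: "transpose (A + B) = transpose A + transpose (B::'a::semiring_1^'c^'r)"
  by (simp add: transpose_def vec_eq_iff)

lemma matrix_left_inverse_imp_right_inverse:
  fixes A :: "real^'r^'n" and B :: "real^'n^'r"
  assumes "CARD('n) = CARD('r)" and BA: "B ** A = mat 1"
  shows "A ** B = mat 1"
proof -
  have "inj ((*v) A)"
  proof (rule injI)
    fix x y assume "A *v x = A *v y"
    then have "B *v (A *v x) = B *v (A *v y)" by simp
    then show "x = y" using BA by (simp add: matrix_vector_mul_assoc)
  qed
  moreover have "vec.dim (UNIV::(real^'n) set) = vec.dim (UNIV::(real^'r) set)"
    using assms(1) by (simp add: dim_vec_eq)
  ultimately have "surj ((*v) A)"
    using vec.linear_injective_imp_surjective[OF matrix_vector_mul_linear_gen] by blast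
  then obtain C :: "real^'n^'r" where AC: "A ** C = mat 1"
    using matrix_right_invertible_surjective by blast
  have "B = B ** (A ** C)" using AC by simp
  also have "\<dots> = C" using BA by (simp add: matrix_mul_assoc)
  finally show ?thesis using AC by simp
qed

lemma norm_orthogonal_mult:
  fixes M :: "real^'n^'m" and X :: "real^'c^'n"
  assumes "transpose M ** M = mat 1"
  shows "norm (M ** X) = norm X"
proof -
  have "transpose (M ** X) ** (M ** X) = transpose X ** ((transpose M ** M) ** X)"
    by (simp add: matrix_transpose_mul matrix_mul_assoc)
  also have "\<dots> = transpose X ** X" using assms by simp
  finally have "(norm (M ** X))^2 = (norm X)^2" unfolding power2_norm_matrix_eq_trace by simp
  then show ?thesis by simp
qed

lemma nonneg_mats_mult: "A \<in> nonneg_mats \<Longrightarrow> B \<in> nonneg_mats \<Longrightarrow> A ** B \<in> nonneg_mats"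
  by (auto simp: nonneg_mats_def matrix_matrix_mult_def intro!: sum_nonneg)

lemma transpose_nonneg_mats: "A \<in> nonneg_mats \<Longrightarrow> transpose A \<in> nonneg_mats"
  by (simp add: nonneg_mats_def transpose_def)

lemma closed_nonneg_mats: "closed nonneg_mats"
  unfolding nonneg_mats_def by (intro closed_Collect_all closed_Collect_le continuous_intros)

lemma closed_stiefel: "closed stiefel"
proof -
  have "stiefel = {X. \<forall>i j. (transpose X ** X)$i$j = mat 1 $i$j}"
    unfolding stiefel_def by (simp add: vec_eq_iff)
  also have "closed \<dots>"
    by (simp add: matrix_matrix_mult_def transpose_def)
       (intro closed_Collect_all closed_Collect_eq continuous_intros)
  finally show ?thesis .
qed

lemma norm_stiefel:
  assumes "(X::real^'r^'n) \<in> stiefel"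
  shows "norm X = sqrt CARD('r)"
proof -
  have "(norm X)^2 = CARD('r)"
    using assms by (simp add: stiefel_def power2_norm_matrix_eq_trace mat_def)
  then show ?thesis by (metis norm_ge_zero real_sqrt_unique)
qed

lemma compact_stiefel: "compact stiefel"
proof -
  have "bounded stiefel"
    by (auto simp: bounded_iff norm_stiefel)
  then show ?thesis using closed_stiefel by (simp add: compact_eq_bounded_closed)
qed

definition neg_part :: "real^'c^'r \<Rightarrow> real^'c^'r" where
  "neg_part X = (\<chi> i j. max 0 (- X$i$j))"

lemma neg_part_nonneg: "neg_part X \<in> nonneg_mats"
  by (simp add: neg_part_def nonneg_mats_def)

lemma add_neg_part_nonneg: "X + neg_part X \<in> nonneg_mats"
  by (simp add: neg_part_def nonneg_mats_def max_def)

lemma norm_neg_part_le_infdist: "norm (neg_part X) \<le> infdist X nonneg_mats"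
proof -
  have "0 \<in> nonneg_mats" by (simp add: nonneg_mats_def)
  then obtain Y where Y: "Y \<in> nonneg_mats" and "infdist X nonneg_mats = dist X Y"
    using infdist_attains_inf[OF closed_nonneg_mats] by blast
  moreover have "(norm (neg_part X))^2 \<le> (norm (X - Y))^2"
    unfolding power2_norm_matrix
  proof (intro sum_mono)
    fix i j
    have "0 \<le> Y$i$j" using Y by (simp add: nonneg_mats_def)
    then have "max 0 (- X$i$j) \<le> \<bar>X$i$j - Y$i$j\<bar>" by arith
    then show "(neg_part X $i$j)^2 \<le> ((X - Y)$i$j)^2"
      by (simp add: neg_part_def abs_le_square_iff[symmetric])
  qed
  ultimately show ?thesis by (metis dist_norm norm_ge_zero power2_le_imp_le)
qed

lemma error_bound_from_local_error_bound:
  fixes K T :: "'a::metric_space set"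
  assumes K: "compact K" and T: "closed T" and "0 < \<epsilon>"
    and local: "\<And>z. z \<in> K \<Longrightarrow> infdist z (K \<inter> T) < \<epsilon> \<Longrightarrow>
                  infdist z (K \<inter> T) \<le> c * infdist z T"
  shows "\<exists>\<kappa>>0. \<forall>z\<in>K. infdist z (K \<inter> T) \<le> \<kappa> * infdist z T"
proof -
  define C where "C = K \<inter> {z. \<epsilon> \<le> infdist z (K \<inter> T)}"
  have "compact C"
    unfolding C_def using K by (intro compact_Int_closed closed_Collect_le continuous_intros)
  have far: "K \<inter> T \<noteq> {}" "z \<notin> T" if "z \<in> C" for z
  proof -
    have "z \<in> K" and pos: "0 < infdist z (K \<inter> T)" using that \<open>0 < \<epsilon>\<close> by (auto simp: C_def)
    then show "K \<inter> T \<noteq> {}" by (auto simp: infdist_def)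
    show "z \<notin> T" using pos \<open>z \<in> K\<close> by (metis IntI infdist_zero less_irrefl)
  qed
  obtain \<delta> where "0 < \<delta>" and \<delta>: "\<And>z. z \<in> C \<Longrightarrow> \<delta> \<le> infdist z T"
  proof (cases "C = {}")
    case False
    moreover have "continuous_on C (\<lambda>z. infdist z T)" by (intro continuous_intros)
    ultimately obtain z0 where "z0 \<in> C" and min: "\<forall>z\<in>C. infdist z0 T \<le> infdist z T"
      using continuous_attains_inf[OF \<open>compact C\<close>] by blast
    moreover have "0 < infdist z0 T"
      using far[OF \<open>z0 \<in> C\<close>] T by (intro infdist_pos_not_in_closed) auto
    ultimately show ?thesis using that by blast
  qed (use that[of 1] in auto)
  define D where "D = diameter K"
  have "0 \<le> D" unfolding D_def using K by (simp add: diameter_ge_0 compact_imp_bounded)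
  define \<kappa> where "\<kappa> = max c (D / \<delta>) + 1"
  have "0 < \<kappa>" using divide_nonneg_pos[OF \<open>0 \<le> D\<close> \<open>0 < \<delta>\<close>] by (simp add: \<kappa>_def max_def)
  moreover have "infdist z (K \<inter> T) \<le> \<kappa> * infdist z T" if "z \<in> K" for z
  proof (cases "infdist z (K \<inter> T) < \<epsilon>")
    case True
    then have "infdist z (K \<inter> T) \<le> c * infdist z T" using local \<open>z \<in> K\<close> by blast
    also have "\<dots> \<le> \<kappa> * infdist z T"
      by (intro mult_right_mono) (auto simp: \<kappa>_def infdist_nonneg)
    finally show ?thesis .
  next
    case False
    then have "z \<in> C" using \<open>z \<in> K\<close> by (simp add: C_def)
    then obtain s where "s \<in> K \<inter> T" using far by blast
    then have "infdist z (K \<inter> T) \<le> D"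
      using infdist_le[of s "K \<inter> T" z] diameter_bounded_bound[OF compact_imp_bounded[OF K] \<open>z \<in> K\<close>]
      by (force simp: D_def)
    also have "\<dots> = D / \<delta> * \<delta>" using \<open>0 < \<delta>\<close> by simp
    also have "\<dots> \<le> \<kappa> * infdist z T"
      using \<delta>[OF \<open>z \<in> C\<close>] \<open>0 < \<kappa>\<close> \<open>0 < \<delta>\<close>
      by (intro mult_mono) (auto simp: \<kappa>_def max_def)
    finally show ?thesis .
  qed
  ultimately show ?thesis by blast
qed

lemma orthogonal_skew_defect:
  fixes W :: "real^'r^'r"
  assumes "transpose W ** W = mat 1"
  shows "(W - mat 1) + transpose (W - mat 1) = - (transpose (W - mat 1) ** (W - mat 1))"
proof -
  define A where "A = W - mat 1"
  have "mat 1 = transpose (mat 1 + A) ** (mat 1 + A)"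
    using assms by (simp add: A_def)
  also have "\<dots> = mat 1 + A + transpose A + transpose A ** A"
    by (simp add: transpose_add matrix_add_ldistrib matrix_add_rdistrib)
  finally show ?thesis unfolding A_def[symmetric] by (simp add: eq_neg_iff_add_eq_0 add.assoc)
qed

lemma power2_le_of_neg_parts_le:
  fixes a b p q :: real
  assumes "0 \<le> p" "- a \<le> p" "0 \<le> q" "- b \<le> q"
  shows "a^2 \<le> p^2 + 2 * q^2 + 2 * (a + b)^2"
proof -
  consider "a < 0" | "0 \<le> a" "b < 0" | "0 \<le> a" "0 \<le> b" by linarith
  then show ?thesis
  proof cases
    case 1
    then have "a^2 \<le> p^2" using assms by (simp add: abs_le_square_iff[symmetric])
    then show ?thesis by (simp add: add_increasing2)
  next
    case 2
    have "a^2 \<le> 2 * b^2 + 2 * (a + b)^2"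
      using sum_squares_ge_zero[of "a + 2 * b" 0] by (simp add: power2_eq_square algebra_simps)
    moreover have "b^2 \<le> q^2" using 2 assms by (simp add: abs_le_square_iff[symmetric])
    ultimately show ?thesis using zero_le_power2[of p] by linarith
  next
    case 3
    then have "a^2 \<le> (a + b)^2" by (simp add: abs_le_square_iff[symmetric])
    then show ?thesis using zero_le_power2[of p] zero_le_power2[of q] zero_le_power2[of "a + b"]
      by linarith
  qed
qed

lemma norm_orthogonal_minus_identity_le:
  fixes W G :: "real^'r^'r"
  assumes W: "transpose W ** W = mat 1"
    and G: "G \<in> nonneg_mats" and WG: "W + G \<in> nonneg_mats"
  shows "(norm (W - mat 1))^2 \<le> 3 * (norm G)^2 + 2 * (norm (W - mat 1))^4"
proof -
  define A where "A = W - mat 1"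
  define S where "S = transpose A ** A"
  have skew: "A$i$j + A$j$i = - S$i$j" for i j
    using arg_cong[OF orthogonal_skew_defect[OF W], of "\<lambda>M. M$i$j"]
    by (simp add: A_def S_def transpose_def)
  have entry: "(A$i$j)^2 \<le> (G$i$j)^2 + 2 * (G$j$i)^2 + 2 * (S$i$j)^2" for i j
  proof (cases "i = j")
    case True
    then have "S$i$j = - 2 * A$i$j" using skew[of i j] by simp
    then have "(S$i$j)^2 = 4 * (A$i$j)^2" by (simp add: power_mult_distrib)
    then show ?thesis
      using zero_le_power2[of "G$i$j"] zero_le_power2[of "G$j$i"] zero_le_power2[of "A$i$j"]
      by linarith
  next
    case False
    then have "W$i$j = A$i$j" "W$j$i = A$j$i" by (simp_all add: A_def mat_def)
    moreover have "0 \<le> (W + G)$i$j" "0 \<le> (W + G)$j$i" "0 \<le> G$i$j" "0 \<le> G$j$i"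
      using G WG by (simp_all add: nonneg_mats_def)
    ultimately have "(A$i$j)^2 \<le> (G$i$j)^2 + 2 * (G$j$i)^2 + 2 * (A$i$j + A$j$i)^2"
      by (intro power2_le_of_neg_parts_le) simp_all
    then show ?thesis using skew[of i j] by simp
  qed
  have "(norm A)^2 \<le> (\<Sum>i\<in>UNIV. \<Sum>j\<in>UNIV. (G$i$j)^2 + 2 * (G$j$i)^2 + 2 * (S$i$j)^2)"
    unfolding power2_norm_matrix by (intro sum_mono) (rule entry)
  also have "\<dots> = (norm G)^2 + 2 * (norm (transpose G))^2 + 2 * (norm S)^2"
    by (simp add: power2_norm_matrix sum.distrib sum_distrib_left transpose_def)
  also have "\<dots> \<le> 3 * (norm G)^2 + 2 * (norm A)^4"
  proof -
    have "norm S \<le> (norm A)^2"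
      using norm_matrix_mul_le[of "transpose A" A] by (simp add: S_def norm_transpose power2_eq_square)
    then have "(norm S)^2 \<le> ((norm A)^2)^2"
      by (rule power_mono) simp
    then show ?thesis by (simp add: norm_transpose flip: power_mult)
  qed
  finally show ?thesis by (simp add: A_def)
qed

lemma norm_minus_nonneg_orthogonal_le:
  fixes Z P :: "real^'r^'n"
  assumes card: "CARD('n) = CARD('r)" and Z: "Z \<in> stiefel" and P: "P \<in> nonneg_stiefel"
    and near: "norm (Z - P) \<le> 1/2"
  shows "norm (Z - P) \<le> 3 * norm (neg_part Z)"
proof -
  have PtP: "transpose P ** P = mat 1" and "P \<in> nonneg_mats"
    using P by (simp_all add: nonneg_stiefel_def stiefel_def)
  have Pt_orth: "transpose (transpose P) ** transpose P = mat 1"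
    using matrix_left_inverse_imp_right_inverse[OF card PtP] by simp
  define W where "W = transpose P ** Z"
  define G where "G = transpose P ** neg_part Z"
  have "transpose W ** W = transpose Z ** (transpose (transpose P) ** transpose P) ** Z"
    by (simp add: W_def matrix_transpose_mul matrix_mul_assoc)
  then have "transpose W ** W = mat 1" using Z Pt_orth by (simp add: stiefel_def)
  moreover have "G \<in> nonneg_mats"
    unfolding G_def by (intro nonneg_mats_mult transpose_nonneg_mats \<open>P \<in> nonneg_mats\<close> neg_part_nonneg)
  moreover have "W + G \<in> nonneg_mats"
    unfolding W_def G_def matrix_add_ldistrib[symmetric]
    by (intro nonneg_mats_mult transpose_nonneg_mats \<open>P \<in> nonneg_mats\<close> add_neg_part_nonneg)
  ultimately have bound: "(norm (W - mat 1))^2 \<le> 3 * (norm G)^2 + 2 * (norm (W - mat 1))^4"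
    by (rule norm_orthogonal_minus_identity_le)
  have "norm (W - mat 1) = norm (Z - P)"
    using norm_orthogonal_mult[OF Pt_orth, of "Z - P"] by (simp add: W_def matrix_diff_ldistrib PtP)
  moreover have "norm G = norm (neg_part Z)"
    unfolding G_def by (rule norm_orthogonal_mult[OF Pt_orth])
  ultimately have "(norm (Z - P))^2 \<le> 3 * (norm (neg_part Z))^2 + 2 * (norm (Z - P))^4"
    using bound by simp
  moreover have "(norm (Z - P))^4 \<le> (norm (Z - P))^2 / 4"
  proof -
    have "(norm (Z - P))^2 \<le> (1/2)^2" using near by (intro power_mono) simp_all
    then have "(norm (Z - P))^2 * (norm (Z - P))^2 \<le> (1/4) * (norm (Z - P))^2"
      by (intro mult_right_mono) (simp_all add: power2_eq_square)
    then show ?thesis by (simp add: power4_eq_xxxx power2_eq_square)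
  qed
  ultimately have "(norm (Z - P))^2 \<le> 9 * (norm (neg_part Z))^2"
    using zero_le_power2[of "norm (neg_part Z)"] by linarith
  then have "(norm (Z - P))^2 \<le> (3 * norm (neg_part Z))^2"
    by (simp add: power_mult_distrib)
  then show ?thesis by (rule power2_le_imp_le) simp
qed

lemma square_local_error_bound:
  fixes Z :: "real^'r^'n"
  assumes "CARD('n) = CARD('r)" and "Z \<in> stiefel" and "infdist Z nonneg_stiefel < 1/2"
  shows "infdist Z nonneg_stiefel \<le> 3 * infdist Z nonneg_mats"
proof (cases "nonneg_stiefel = ({} :: (real^'r^'n) set)")
  case True
  then have "infdist Z nonneg_stiefel = 0" by (simp add: infdist_def)
  then show ?thesis by (simp add: infdist_nonneg)
next
  case False
  have "closed (nonneg_stiefel :: (real^'r^'n) set)"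
    unfolding nonneg_stiefel_def using closed_nonneg_mats closed_stiefel by (rule closed_Int)
  then obtain P where P: "P \<in> nonneg_stiefel" and dist_P: "infdist Z nonneg_stiefel = dist Z P"
    using infdist_attains_inf False by blast
  have "norm (Z - P) \<le> 3 * norm (neg_part Z)"
    using assms dist_P by (intro norm_minus_nonneg_orthogonal_le[OF _ _ P]) (simp_all add: dist_norm)
  also have "\<dots> \<le> 3 * infdist Z nonneg_mats"
    using norm_neg_part_le_infdist by simp
  finally show ?thesis by (simp add: dist_P dist_norm)
qed

lemma power2_norm_pos_neg_parts:
  "(norm (x *\<^sub>R (X + neg_part X) - y *\<^sub>R neg_part X))^2
     = x^2 * (norm (X + neg_part X))^2 + y^2 * (norm (neg_part X))^2"
proof -
  have "(x * (z + max 0 (- z)) - y * max 0 (- z))^2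
          = x^2 * (z + max 0 (- z))^2 + y^2 * (max 0 (- z))^2" for z :: real
    by (cases "0 \<le> z") (simp_all add: power_mult_distrib)
  then show ?thesis
    by (simp add: power2_norm_matrix neg_part_def sum.distrib sum_distrib_left)
qed

lemma stiefel_single_column_iff:
  assumes "CARD('r) = 1"
  shows "(X::real^'r^'n) \<in> stiefel \<longleftrightarrow> norm X = 1"
proof -
  obtain j0 :: 'r where U: "UNIV = {j0}"
    using assms card_1_singletonE by blast
  then have "i = j0" for i :: 'r by auto
  then have "X \<in> stiefel \<longleftrightarrow> (transpose X ** X)$j0$j0 = 1"
    unfolding stiefel_def vec_eq_iff by (simp add: mat_def) metis
  also have "\<dots> \<longleftrightarrow> (norm X)^2 = 1"
    by (simp add: power2_norm_matrix_eq_trace U)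
  also have "\<dots> \<longleftrightarrow> norm X = 1"
    using power2_eq_iff_nonneg[of "norm X" 1] by simp
  finally show ?thesis .
qed

lemma single_column_error_bound:
  fixes Z :: "real^'r^'n"
  assumes card: "CARD('r) = 1" and Z: "Z \<in> stiefel"
  shows "infdist Z nonneg_stiefel \<le> 2 * infdist Z nonneg_mats"
proof -
  define a where "a = norm (Z + neg_part Z)"
  define b where "b = norm (neg_part Z)"
  have "norm Z = 1" using Z by (simp add: stiefel_single_column_iff[OF card])
  then have ab: "a^2 + b^2 = 1"
    using power2_norm_pos_neg_parts[of 1 Z 1] by (simp add: a_def b_def)
  have "\<exists>Q\<in>nonneg_stiefel. norm (Z - Q) \<le> 2 * b"
  proof (cases "a = 0")
    case True
    then have "Z + neg_part Z = 0" by (simp add: a_def)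
    have "b^2 = 1" using ab True by simp
    then have "b = 1" using power2_eq_iff_nonneg[of b 1] by (simp add: b_def)
    have "Z - neg_part Z = (Z + neg_part Z) - 2 *\<^sub>R neg_part Z"
      by (simp add: scaleR_2 algebra_simps)
    then have "norm (Z - neg_part Z) = 2 * b"
      using \<open>Z + neg_part Z = 0\<close> by (simp add: b_def)
    moreover have "neg_part Z \<in> nonneg_stiefel"
      using neg_part_nonneg \<open>b = 1\<close>
      by (simp add: b_def nonneg_stiefel_def stiefel_single_column_iff[OF card])
    ultimately show ?thesis by force
  next
    case False
    then have "0 < a" by (simp add: a_def)
    define Q where "Q = (1 / a) *\<^sub>R (Z + neg_part Z)"
    have "Q \<in> nonneg_mats"
      using \<open>0 < a\<close> add_neg_part_nonneg[of Z] by (simp add: Q_def nonneg_mats_def)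
    moreover have "norm Q = 1"
      using \<open>0 < a\<close> by (simp add: Q_def a_def)
    ultimately have "Q \<in> nonneg_stiefel"
      by (simp add: nonneg_stiefel_def stiefel_single_column_iff[OF card])
    have "Z - Q = (1 - 1 / a) *\<^sub>R (Z + neg_part Z) - 1 *\<^sub>R neg_part Z"
      by (simp add: Q_def algebra_simps)
    then have "(norm (Z - Q))^2 = (1 - 1 / a)^2 * a^2 + b^2"
      using power2_norm_pos_neg_parts[of "1 - 1 / a" Z 1] by (simp add: a_def b_def)
    also have "(1 - 1 / a)^2 * a^2 = (a - 1)^2"
    proof -
      have "(1 - 1 / a) * a = a - 1" using \<open>0 < a\<close> by (simp add: algebra_simps)
      then show ?thesis by (metis power_mult_distrib)
    qed
    also have "(a - 1)^2 + b^2 \<le> (2 * b)^2"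
    proof -
      have "a^2 \<le> 1" using ab zero_le_power2[of b] by linarith
      then have "a \<le> 1" using power2_le_imp_le[of a 1] by simp
      then have "a * a \<le> a" using \<open>0 < a\<close> by (simp add: mult_left_le)
      then show ?thesis
        using ab \<open>a \<le> 1\<close> unfolding power2_eq_square by (simp add: algebra_simps)
    qed
    finally have "norm (Z - Q) \<le> 2 * b"
      by (rule power2_le_imp_le) (simp add: b_def)
    with \<open>Q \<in> nonneg_stiefel\<close> show ?thesis by blast
  qed
  then obtain Q where "Q \<in> nonneg_stiefel" "norm (Z - Q) \<le> 2 * b" by blast
  then have "infdist Z nonneg_stiefel \<le> 2 * b"
    by (intro infdist_le2) (simp_all add: dist_norm)
  also have "\<dots> \<le> 2 * infdist Z nonneg_mats"
    using norm_neg_part_le_infdist by (simp add: b_def)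
  finally show ?thesis .
qed

theorem corollary3p5:
  assumes "CARD('n::finite) \<ge> CARD('r::finite)"
    and "CARD('n) = CARD('r) \<or> (CARD('n) > CARD('r) \<and> CARD('r) = 1)"
  shows "\<exists>\<kappa>>0. \<forall>Z::real^'r^'n. Z \<in> stiefel \<longrightarrow>
           infdist Z nonneg_stiefel \<le> \<kappa> * infdist Z nonneg_mats"
proof (cases "CARD('n) = CARD('r)")
  case True
  have S: "stiefel \<inter> nonneg_mats = (nonneg_stiefel :: (real^'r^'n) set)"
    by (simp add: nonneg_stiefel_def Int_commute)
  have "\<exists>\<kappa>>0. \<forall>Z\<in>stiefel. infdist Z (stiefel \<inter> nonneg_mats)
                                \<le> \<kappa> * infdist Z (nonneg_mats :: (real^'r^'n) set)"
    by (rule error_bound_from_local_error_bound[OF compact_stiefel closed_nonneg_mats, of "1/2" 3])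
       (simp_all add: S square_local_error_bound[OF True])
  then show ?thesis unfolding S Ball_def .
next
  case False
  then have "CARD('r) = 1" using assms(2) by blast
  then show ?thesis
    using single_column_error_bound by (intro exI[of _ 2]) auto
qed

end
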